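(* Let $0<p_0\le p<\infty$, $0<q_0\le q<\infty$ and $q/p\le q_0/p_0$. Let $f,g$ be measurable functions such that there exists $\tau_0\in(0,\infty)$ with $\lambda_f(\tau)\le\lambda_g(\tau)$ for $\tau<\tau_0$ and $\lambda_f(\tau)\ge\lambda_g(\tau)$ for $\tau>\tau_0$. Assume that the integral $\int_0^\infty(f^*(t)^{q_0}-g^*(t)^{q_0})\,d(t^{q_0/p_0})$ exists and is $\ge0$, and that $(f^*(t)^q-g^*(t)^q)t^{q/p-1}\in L^1(0,\infty)$. Then $\int_0^\infty(f^*(t)^q-g^*(t)^q)\,d(t^{q/p})\ge 0$. Consequently, if $f,g\in L(p,q)$, then $\|g\|_{L(p,q)}\le\|f\|_{L(p,q)}$.
   Context: $\lambda_f(\tau)=\mu\{|f|>\tau\}$ and $f^*(s)=\inf\{\tau>0:\lambda_f(\tau)\le s\}$ for $s>0$. For $a>0$, $\int_0^\infty h(t)\,d(t^a)$ means $a\int_0^\infty h(t)t^{a-1}\,dt$. For $0<p,q<\infty$ the Lorentz quasi-norm is $\|f\|_{L(p,q)}=\bigl(\int_0^\infty f^*(s)^q\,d(s^{q/p})\bigr)^{1/q}$, and $L(p,q)$ is the set of $f$ with finite quasi-norm. *)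

theory Defs
  imports "HOL-Analysis.Analysis"
begin

definition distr_fun :: "'a measure \<Rightarrow> ('a \<Rightarrow> 'b::real_normed_vector) \<Rightarrow> real \<Rightarrow> ennreal" where
  "distr_fun M f \<tau> = emeasure M {x \<in> space M. norm (f x) > \<tau>}"

text \<open>Decreasing rearrangement f^*(s) = inf{tau > 0 : lambda_f(tau) <= s}, values in [0,infinity]
  (the infimum of the empty set is infinity).\<close>
definition rearr :: "'a measure \<Rightarrow> ('a \<Rightarrow> 'b::real_normed_vector) \<Rightarrow> real \<Rightarrow> ennreal" where
  "rearr M f s = Inf (ennreal ` {\<tau>. \<tau> > 0 \<and> distr_fun M f \<tau> \<le> ennreal s})"

definition epow :: "ennreal \<Rightarrow> real \<Rightarrow> ennreal" where
  "epow x r = (if x = top then top else ennreal (enn2real x powr r))"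

text \<open>Integrand h(t) = f^*(t)^q * d(t^a)/dt = f^*(t)^q * a t^(a-1), a = q/p.\<close>
definition lz_dens :: "'a measure \<Rightarrow> ('a \<Rightarrow> 'b::real_normed_vector) \<Rightarrow> real \<Rightarrow> real \<Rightarrow> real \<Rightarrow> ennreal" where
  "lz_dens M f p q t = epow (rearr M f t) q * ennreal ((q / p) * t powr (q / p - 1))"

definition lorentz_norm :: "'a measure \<Rightarrow> real \<Rightarrow> real \<Rightarrow> ('a \<Rightarrow> 'b::real_normed_vector) \<Rightarrow> ennreal" where
  "lorentz_norm M p q f = epow (\<integral>\<^sup>+ s\<in>{0<..}. lz_dens M f p q s \<partial>lborel) (1 / q)"

definition in_lorentz :: "'a measure \<Rightarrow> real \<Rightarrow> real \<Rightarrow> ('a \<Rightarrow> 'b::real_normed_vector) \<Rightarrow> bool" where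
  "in_lorentz M p q f \<longleftrightarrow> lorentz_norm M p q f < top"

text \<open>The (Lebesgue) integral  int_0^infty (f^*(t)^q - g^*(t)^q) d(t^(q/p))  exists (as an extended
  real number: the difference is a.e. defined, i.e. not of the form infinity - infinity, and
  not both its positive and negative parts have infinite integral) and is >= 0.
  Equivalently: the negative part has finite integral, not exceeding that of the positive part.
  (Truncated subtraction on ennreal yields the positive part.)\<close>
definition lz_diff_integral_nonneg ::
  "'a measure \<Rightarrow> ('a \<Rightarrow> 'b::real_normed_vector) \<Rightarrow> ('a \<Rightarrow> 'b) \<Rightarrow> real \<Rightarrow> real \<Rightarrow> bool" where
  "lz_diff_integral_nonneg M f g p q \<longleftrightarrow>
     (AE t in lborel. t > 0 \<longrightarrow> \<not> (lz_dens M f p q t = top \<and> lz_dens M g p q t = top)) \<and>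
     (\<integral>\<^sup>+ t\<in>{0<..}. (lz_dens M g p q t - lz_dens M f p q t) \<partial>lborel) < top \<and>
     (\<integral>\<^sup>+ t\<in>{0<..}. (lz_dens M g p q t - lz_dens M f p q t) \<partial>lborel)
       \<le> (\<integral>\<^sup>+ t\<in>{0<..}. (lz_dens M f p q t - lz_dens M g p q t) \<partial>lborel)"

end

theory Submission
  imports Defs
begin

text \<open>By the layer-cake formula, \<open>f*(t)^q - g*(t)^q\<close> is the integral of \<open>q \<tau>^(q-1)\<close> over the
  levels \<open>\<tau>\<close> between \<open>g*(t)\<close> and \<open>f*(t)\<close>. Hence the negative and the positive part of the
  integral are integrals over two regions of the \<open>(t, \<tau>)\<close>-plane against the weight
  \<open>q \<tau>^(q-1) \<cdot> (q/p) t^(q/p-1)\<close>. The single crossing of the distribution functions at \<open>\<tau>0\<close>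
  confines the region where \<open>g* > f*\<close> to \<open>\<tau> \<le> \<tau>0, t \<ge> L\<close> and the region where \<open>f* > g*\<close> to
  \<open>\<tau> \<ge> \<tau>0, t < L\<close>, where \<open>L = \<lambda>_f(\<tau>0+)\<close>. The ratio of the weights for \<open>(p, q)\<close> and
  \<open>(p0, q0)\<close> is a constant times \<open>\<tau>^(q-q0) t^(q/p-q0/p0)\<close>, increasing in \<open>\<tau>\<close> and decreasing
  in \<open>t\<close>, so it is at most its value \<open>K\<close> at \<open>(L, \<tau>0)\<close> on the first region and at least \<open>K\<close>
  on the second. Thus the negative part for \<open>(p, q)\<close> is at most \<open>K\<close> times the negative part
  for \<open>(p0, q0)\<close>, which by hypothesis is at most \<open>K\<close> times the positive part for \<open>(p0, q0)\<close>,
  which in turn is at most the positive part for \<open>(p, q)\<close>.\<close>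

lemma borel_measurable_antimono_ennreal:
  fixes h :: "real \<Rightarrow> ennreal"
  assumes "antimono h"
  shows "h \<in> borel_measurable borel"
proof (rule borel_measurableI_greater)
  fix y
  have "is_interval {x. y < h x}"
    using assms unfolding is_interval_1 antimono_def by (auto intro: less_le_trans)
  then show "{x \<in> space borel. y < h x} \<in> sets borel"
    using real_interval_borel_measurable by simp
qed

lemma ennreal_less_imp_real_between:
  fixes x :: ennreal
  assumes "ennreal a < x"
  obtains \<sigma> where "a < \<sigma>" "ennreal \<sigma> < x"
proof -
  obtain z where z: "ennreal a < z" "z < x" using dense[OF assms] by blast
  then obtain r where r: "z = ennreal r" "0 \<le> r" by (cases z) auto
  then have "a < r" using z(1) by (metis ennreal_leI not_le)
  then show ?thesis using r z that by blast
qed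

lemma nn_integral_powr_derivative:
  fixes a b s :: real
  assumes "0 \<le> b" "b < a" "0 < s"
  shows "(\<integral>\<^sup>+ \<tau>. ennreal (s * \<tau> powr (s - 1)) * indicator {\<tau>. 0 < \<tau> \<and> b \<le> \<tau> \<and> \<tau> < a} \<tau> \<partial>lborel)
         = ennreal (a powr s - b powr s)"
proof -
  have ftc: "((\<lambda>\<tau>. s * \<tau> powr (s - 1)) has_integral (a powr s - b powr s)) {b..a}"
  proof (rule fundamental_theorem_of_calculus_interior)
    show "continuous_on {b..a} (\<lambda>\<tau>. \<tau> powr s)"
      using assms by (intro continuous_on_powr') (auto intro: continuous_intros)
    fix x assume "x \<in> {b<..<a}"
    then have "0 < x" using assms by auto
    then show "((\<lambda>\<tau>. \<tau> powr s) has_vector_derivative s * x powr (s - 1)) (at x)"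
      by (auto intro!: derivative_eq_intros simp: has_real_derivative_iff_has_vector_derivative[symmetric])
  qed (use assms in simp)
  have ftc_UNIV: "((\<lambda>\<tau>. indicator {b..a} \<tau> * (s * \<tau> powr (s - 1))) has_integral (a powr s - b powr s)) UNIV"
  proof -
    have "(\<lambda>\<tau>. indicator {b..a} \<tau> * (s * \<tau> powr (s - 1))) = (\<lambda>\<tau>. if \<tau> \<in> {b..a} then s * \<tau> powr (s - 1) else 0)"
      by (auto simp: fun_eq_iff)
    then show ?thesis using has_integral_restrict_UNIV[THEN iffD2, OF ftc] by simp
  qed
  have "(\<integral>\<^sup>+ \<tau>. ennreal (indicator {b..a} \<tau> * (s * \<tau> powr (s - 1))) \<partial>lborel)
      = ennreal (a powr s - b powr s)"
    by (rule nn_integral_has_integral_lborel[OF _ _ ftc_UNIV]) (use assms in auto)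
  moreover have "AE \<tau> in lborel. ennreal (s * \<tau> powr (s - 1)) * indicator {\<tau>. 0 < \<tau> \<and> b \<le> \<tau> \<and> \<tau> < a} \<tau>
      = ennreal (indicator {b..a} \<tau> * (s * \<tau> powr (s - 1)))"
    using AE_lborel_singleton[of 0] AE_lborel_singleton[of a]
    by eventually_elim (use assms in \<open>auto simp: indicator_def\<close>)
  ultimately show ?thesis by (simp add: nn_integral_cong_AE)
qed

lemma nn_integral_powr_derivative_unbounded:
  fixes b s :: real
  assumes "0 \<le> b" "0 < s"
  shows "(\<integral>\<^sup>+ \<tau>. ennreal (s * \<tau> powr (s - 1)) * indicator {\<tau>. 0 < \<tau> \<and> b \<le> \<tau>} \<tau> \<partial>lborel) = top"
    (is "?I = top")
proof -
  have "of_nat n \<le> ?I" for n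
  proof -
    define R where "R = (b powr s + n + 1) powr (1 / s)"
    have R_powr: "R powr s = b powr s + n + 1"
      using assms by (simp add: R_def powr_powr add_nonneg_pos)
    have "b < R"
    proof (rule ccontr)
      assume "\<not> b < R"
      then have "R powr s \<le> b powr s"
        using assms by (intro powr_mono2) (auto simp: R_def)
      then show False by (simp add: R_powr)
    qed
    have "of_nat n \<le> ennreal (R powr s - b powr s)"
      by (simp add: R_powr ennreal_of_nat_eq_real_of_nat)
    also have "\<dots> = (\<integral>\<^sup>+ \<tau>. ennreal (s * \<tau> powr (s - 1)) * indicator {\<tau>. 0 < \<tau> \<and> b \<le> \<tau> \<and> \<tau> < R} \<tau> \<partial>lborel)"
      using nn_integral_powr_derivative[OF assms(1) \<open>b < R\<close> assms(2)] by simp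
    also have "\<dots> \<le> ?I"
      by (intro nn_integral_mono) (auto simp: indicator_def)
    finally show ?thesis .
  qed
  then have "(SUP n. of_nat n) \<le> ?I" by (rule SUP_least)
  then show ?thesis by (simp add: ennreal_SUP_of_nat_eq_top top_unique)
qed

lemma set_nn_integral_le_via_cmult:
  fixes u v u0 v0 :: "'a \<Rightarrow> ennreal"
  assumes "AE x in M. x \<in> A \<longrightarrow> u x \<le> K * u0 x" "AE x in M. x \<in> A \<longrightarrow> K * v0 x \<le> v x"
    and "(\<integral>\<^sup>+ x\<in>A. u0 x \<partial>M) \<le> (\<integral>\<^sup>+ x\<in>A. v0 x \<partial>M)"
    and [measurable]: "u0 \<in> borel_measurable M" "v0 \<in> borel_measurable M" "A \<in> sets M"
  shows "(\<integral>\<^sup>+ x\<in>A. u x \<partial>M) \<le> (\<integral>\<^sup>+ x\<in>A. v x \<partial>M)"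
proof -
  have "(\<integral>\<^sup>+ x\<in>A. u x \<partial>M) \<le> (\<integral>\<^sup>+ x\<in>A. K * u0 x \<partial>M)"
    using assms(1) by (intro nn_integral_mono_AE) (auto simp: indicator_def)
  also have "\<dots> = K * (\<integral>\<^sup>+ x\<in>A. u0 x \<partial>M)"
    by (subst nn_integral_cmult[symmetric]) (auto simp: mult.assoc)
  also have "\<dots> \<le> K * (\<integral>\<^sup>+ x\<in>A. v0 x \<partial>M)"
    using assms(3) by (rule mult_left_mono) simp
  also have "\<dots> = (\<integral>\<^sup>+ x\<in>A. K * v0 x \<partial>M)"
    by (subst nn_integral_cmult[symmetric]) (auto simp: mult.assoc)
  also have "\<dots> \<le> (\<integral>\<^sup>+ x\<in>A. v x \<partial>M)"
    using assms(2) by (intro nn_integral_mono_AE) (auto simp: indicator_def)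
  finally show ?thesis .
qed

lemma integral_nonneg_of_neg_part_le:
  fixes u :: "'a \<Rightarrow> real"
  assumes u: "integrable M u" and "(\<integral>\<^sup>+ x. ennreal (- u x) \<partial>M) \<le> (\<integral>\<^sup>+ x. ennreal (u x) \<partial>M)"
  shows "0 \<le> integral\<^sup>L M u"
proof -
  have "(\<integral>\<^sup>+ x. ennreal (u x) \<partial>M) < top"
    using integrableD(2)[OF u] by (simp add: less_top)
  with assms(2) have "enn2real (\<integral>\<^sup>+ x. ennreal (- u x) \<partial>M) \<le> enn2real (\<integral>\<^sup>+ x. ennreal (u x) \<partial>M)"
    by (intro enn2real_mono)
  then show ?thesis by (simp add: real_lebesgue_integral_def[OF u])
qed

lemma set_nn_integral_le_of_diff_le:
  fixes u v :: "'a \<Rightarrow> ennreal"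
  assumes [measurable]: "u \<in> borel_measurable M" "v \<in> borel_measurable M" "A \<in> sets M"
    and "(\<integral>\<^sup>+ x\<in>A. (v x - u x) \<partial>M) \<le> (\<integral>\<^sup>+ x\<in>A. (u x - v x) \<partial>M)"
  shows "(\<integral>\<^sup>+ x\<in>A. v x \<partial>M) \<le> (\<integral>\<^sup>+ x\<in>A. u x \<partial>M)"
proof -
  have split: "b = min a b + (b - a)" for a b :: ennreal
    by (cases "a \<le> b") (auto simp: add_diff_inverse_ennreal min_def diff_eq_0_iff_ennreal less_top[symmetric])
  let ?m = "\<lambda>x. min (u x) (v x) * indicator A x"
  have v_split: "v x * indicator A x = ?m x + (v x - u x) * indicator A x"
    and u_split: "u x * indicator A x = ?m x + (u x - v x) * indicator A x" for x
    using split[of "u x" "v x"] split[of "v x" "u x"] by (metis distrib_right min.commute)+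
  have "(\<integral>\<^sup>+ x\<in>A. v x \<partial>M) = (\<integral>\<^sup>+ x. ?m x + (v x - u x) * indicator A x \<partial>M)"
    by (simp only: v_split)
  also have "\<dots> = (\<integral>\<^sup>+ x. ?m x \<partial>M) + (\<integral>\<^sup>+ x\<in>A. (v x - u x) \<partial>M)"
    by (rule nn_integral_add) auto
  also have "\<dots> \<le> (\<integral>\<^sup>+ x. ?m x \<partial>M) + (\<integral>\<^sup>+ x\<in>A. (u x - v x) \<partial>M)"
    using assms(4) by (rule add_left_mono)
  also have "\<dots> = (\<integral>\<^sup>+ x. ?m x + (u x - v x) * indicator A x \<partial>M)"
    by (rule nn_integral_add[symmetric]) auto
  also have "\<dots> = (\<integral>\<^sup>+ x\<in>A. u x \<partial>M)"
    by (simp only: u_split)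
  finally show ?thesis .
qed

lemma epow_ennreal: "0 \<le> a \<Longrightarrow> epow (ennreal a) s = ennreal (a powr s)"
  by (simp add: epow_def)

lemma epow_top [simp]: "epow top s = top"
  by (simp add: epow_def)

lemma epow_eq_top_iff [simp]: "epow x s = top \<longleftrightarrow> x = top"
  by (simp add: epow_def)

lemma epow_mono:
  assumes "x \<le> y" "0 \<le> r"
  shows "epow x r \<le> epow y r"
proof (cases y)
  case (real b)
  moreover from this obtain a where "x = ennreal a" "0 \<le> a"
    using assms(1) by (cases x) (auto simp: top_unique)
  ultimately show ?thesis
    using assms by (auto simp: epow_ennreal ennreal_le_iff intro!: ennreal_leI powr_mono2)
qed simp

lemma epow_measurable [measurable]:
  assumes "F \<in> borel_measurable N"
  shows "(\<lambda>x. epow (F x) r) \<in> borel_measurable N"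
proof -
  have "{y::ennreal \<in> space borel. y = top} \<in> sets borel" by simp
  then have "(\<lambda>y. epow y r) \<in> borel_measurable borel"
    unfolding epow_def by (rule measurable_If[rotated 2]) measurable
  with assms show ?thesis by (rule measurable_compose)
qed

definition levels_between :: "ennreal \<Rightarrow> ennreal \<Rightarrow> real set" where
  "levels_between y x = {\<tau>. 0 < \<tau> \<and> y \<le> ennreal \<tau> \<and> ennreal \<tau> < x}"

lemma levels_between_sets [measurable]: "levels_between y x \<in> sets borel"
  unfolding levels_between_def by measurable

lemma epow_diff_layer_cake:
  assumes s: "0 < s" and not_both_top: "\<not> (x = top \<and> y = top)"
  shows "epow x s - epow y s = (\<integral>\<^sup>+ \<tau>\<in>levels_between y x. ennreal (s * \<tau> powr (s - 1)) \<partial>lborel)"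
proof (cases y)
  case top
  then have "levels_between y x = {}"
    by (auto simp: levels_between_def top_unique)
  with top not_both_top show ?thesis by (cases x) (auto simp: epow_ennreal)
next
  case (real b)
  note y = this
  show ?thesis
  proof (cases x)
    case top
    then have "levels_between y x = {\<tau>. 0 < \<tau> \<and> b \<le> \<tau>}"
      using y by (auto simp: levels_between_def ennreal_le_iff)
    with top y s show ?thesis by (simp add: nn_integral_powr_derivative_unbounded)
  next
    case (real a)
    note x = this
    show ?thesis
    proof (cases "b < a")
      case True
      then have "levels_between y x = {\<tau>. 0 < \<tau> \<and> b \<le> \<tau> \<and> \<tau> < a}"
        using y x by (auto simp: levels_between_def ennreal_le_iff ennreal_less_iff)
      with True y x s show ?thesis
        by (simp add: epow_ennreal ennreal_minus nn_integral_powr_derivative)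
    next
      case False
      then have "levels_between y x = {}"
        using y x by (auto simp: levels_between_def ennreal_le_iff ennreal_less_iff)
      moreover have "a powr s \<le> b powr s" using False x s by (intro powr_mono2) auto
      ultimately show ?thesis
        using y x by (simp add: epow_ennreal ennreal_minus ennreal_eq_0_iff)
    qed
  qed
qed

lemma distr_fun_antimono:
  assumes "f \<in> borel_measurable M" "\<sigma>1 \<le> \<sigma>2"
  shows "distr_fun M f \<sigma>2 \<le> distr_fun M f \<sigma>1"
  unfolding distr_fun_def using assms by (intro emeasure_mono) auto

lemma rearr_antimono: "antimono (rearr M f)"
  unfolding rearr_def antimono_def
  by (auto intro!: Inf_superset_mono image_mono intro: order_trans ennreal_leI)

lemma rearr_measurable [measurable]: "rearr M f \<in> borel_measurable borel"
  by (rule borel_measurable_antimono_ennreal[OF rearr_antimono])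

lemma rearr_le_of_distr_fun_le: "0 < \<sigma> \<Longrightarrow> distr_fun M f \<sigma> \<le> ennreal t \<Longrightarrow> rearr M f t \<le> ennreal \<sigma>"
  unfolding rearr_def by (intro Inf_lower) auto

lemma distr_fun_le_of_rearr_less:
  assumes "f \<in> borel_measurable M" "rearr M f t < ennreal \<sigma>"
  shows "distr_fun M f \<sigma> \<le> ennreal t"
proof -
  obtain \<sigma>' where "0 < \<sigma>'" "distr_fun M f \<sigma>' \<le> ennreal t" "ennreal \<sigma>' < ennreal \<sigma>"
    using assms(2) unfolding rearr_def by (auto simp: Inf_less_iff)
  then show ?thesis
    using distr_fun_antimono[OF assms(1), of \<sigma>' \<sigma>] by (auto simp: ennreal_less_iff)
qed

lemma rearr_gap_below_crossing:
  assumes fm: "f \<in> borel_measurable M"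
    and hi: "\<And>\<tau>. \<tau> > \<tau>0 \<Longrightarrow> distr_fun M f \<tau> \<ge> distr_fun M g \<tau>"
    and \<tau>: "\<tau> \<in> levels_between (rearr M f t) (rearr M g t)"
  shows "\<tau> \<le> \<tau>0" "(SUP \<sigma>\<in>{\<tau>0<..}. distr_fun M f \<sigma>) \<le> ennreal t"
proof -
  have "0 < \<tau>" and f_le: "rearr M f t \<le> ennreal \<tau>" and g_gt: "ennreal \<tau> < rearr M g t"
    using \<tau> by (auto simp: levels_between_def)
  have f_less: "distr_fun M f \<sigma> \<le> ennreal t" if "\<tau> < \<sigma>" for \<sigma>
  proof (rule distr_fun_le_of_rearr_less[OF fm])
    have "ennreal \<tau> < ennreal \<sigma>"
      using that \<open>0 < \<tau>\<close> by (intro ennreal_lessI) auto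
    then show "rearr M f t < ennreal \<sigma>" by (rule le_less_trans[OF f_le])
  qed
  show "\<tau> \<le> \<tau>0"
  proof (rule ccontr)
    assume "\<not> \<tau> \<le> \<tau>0"
    obtain \<sigma> where \<sigma>: "\<tau> < \<sigma>" "ennreal \<sigma> < rearr M g t"
      using ennreal_less_imp_real_between[OF g_gt] by blast
    have "distr_fun M g \<sigma> \<le> distr_fun M f \<sigma>"
      using hi \<open>\<not> \<tau> \<le> \<tau>0\<close> \<sigma> by simp
    then have "rearr M g t \<le> ennreal \<sigma>"
      using f_less[OF \<sigma>(1)] \<sigma> \<open>0 < \<tau>\<close> by (intro rearr_le_of_distr_fun_le) auto
    with \<sigma> show False by simp
  qed
  then show "(SUP \<sigma>\<in>{\<tau>0<..}. distr_fun M f \<sigma>) \<le> ennreal t"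
    using f_less by (intro SUP_least) auto
qed

lemma rearr_gap_above_crossing:
  assumes gm: "g \<in> borel_measurable M"
    and lo: "\<And>\<tau>. 0 < \<tau> \<Longrightarrow> \<tau> < \<tau>0 \<Longrightarrow> distr_fun M f \<tau> \<le> distr_fun M g \<tau>"
    and "0 < \<tau>0"
    and \<tau>: "\<tau> \<in> levels_between (rearr M g t) (rearr M f t)"
  shows "\<tau>0 \<le> \<tau>" "ennreal t < (SUP \<sigma>\<in>{\<tau>0<..}. distr_fun M f \<sigma>)"
proof -
  have "0 < \<tau>" and g_le: "rearr M g t \<le> ennreal \<tau>" and f_gt: "ennreal \<tau> < rearr M f t"
    using \<tau> by (auto simp: levels_between_def)
  show "\<tau>0 \<le> \<tau>"
  proof (rule ccontr)
    assume "\<not> \<tau>0 \<le> \<tau>"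
    obtain \<sigma> where \<sigma>: "\<tau> < \<sigma>" "ennreal \<sigma> < rearr M f t"
      using ennreal_less_imp_real_between[OF f_gt] by blast
    define \<sigma>' where "\<sigma>' = min \<sigma> ((\<tau> + \<tau>0) / 2)"
    have "\<sigma>' \<le> (\<tau> + \<tau>0) / 2" unfolding \<sigma>'_def by (rule min.cobounded2)
    moreover have "\<tau> < (\<tau> + \<tau>0) / 2" using \<open>\<not> \<tau>0 \<le> \<tau>\<close> by simp
    ultimately have \<sigma>': "\<tau> < \<sigma>'" "\<sigma>' < \<tau>0"
      using \<sigma>(1) by (simp_all add: \<sigma>'_def)
    have "ennreal \<sigma>' \<le> ennreal \<sigma>" by (simp add: \<sigma>'_def ennreal_leI)
    with \<sigma> have f_gt': "ennreal \<sigma>' < rearr M f t" by simp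
    have "ennreal \<tau> < ennreal \<sigma>'"
      using \<sigma>' \<open>0 < \<tau>\<close> by (intro ennreal_lessI) auto
    then have "rearr M g t < ennreal \<sigma>'" by (rule le_less_trans[OF g_le])
    then have "distr_fun M g \<sigma>' \<le> ennreal t" by (rule distr_fun_le_of_rearr_less[OF gm])
    moreover have "distr_fun M f \<sigma>' \<le> distr_fun M g \<sigma>'"
      using lo \<sigma>' \<open>0 < \<tau>\<close> by simp
    ultimately have "rearr M f t \<le> ennreal \<sigma>'"
      using \<sigma>' \<open>0 < \<tau>\<close> by (intro rearr_le_of_distr_fun_le) auto
    with f_gt' show False by simp
  qed
  then have "ennreal \<tau>0 < rearr M f t"
    using f_gt by (meson ennreal_leI le_less_trans)
  then obtain \<sigma> where \<sigma>: "\<tau>0 < \<sigma>" "ennreal \<sigma> < rearr M f t"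
    by (rule ennreal_less_imp_real_between)
  have "\<not> distr_fun M f \<sigma> \<le> ennreal t"
  proof
    assume "distr_fun M f \<sigma> \<le> ennreal t"
    then have "rearr M f t \<le> ennreal \<sigma>"
      using \<sigma> \<open>0 < \<tau>0\<close> by (intro rearr_le_of_distr_fun_le) auto
    with \<sigma> show False by simp
  qed
  then have "ennreal t < distr_fun M f \<sigma>" by simp
  also have "\<dots> \<le> (SUP \<sigma>\<in>{\<tau>0<..}. distr_fun M f \<sigma>)"
    using \<sigma> by (intro SUP_upper) auto
  finally show "ennreal t < (SUP \<sigma>\<in>{\<tau>0<..}. distr_fun M f \<sigma>)" .
qed

definition layer_weight :: "real \<Rightarrow> real \<Rightarrow> real \<Rightarrow> real \<Rightarrow> real" where
  "layer_weight q a t \<tau> = q * \<tau> powr (q - 1) * (a * t powr (a - 1))"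

lemma layer_weight_nonneg: "0 \<le> q \<Longrightarrow> 0 \<le> a \<Longrightarrow> 0 \<le> layer_weight q a t \<tau>"
  by (simp add: layer_weight_def)

lemma layer_weight_pos: "0 < q \<Longrightarrow> 0 < a \<Longrightarrow> 0 < t \<Longrightarrow> 0 < \<tau> \<Longrightarrow> 0 < layer_weight q a t \<tau>"
  by (simp add: layer_weight_def)

lemma layer_weight_factor:
  assumes "0 < q0" "0 < a0"
  shows "layer_weight q a t \<tau>
    = q / q0 * (a / a0) * (\<tau> powr (q - q0) * t powr (a - a0)) * layer_weight q0 a0 t \<tau>"
proof -
  have "\<tau> powr (q - 1) = \<tau> powr (q - q0) * \<tau> powr (q0 - 1)"
    "t powr (a - 1) = t powr (a - a0) * t powr (a0 - 1)"
    by (simp_all add: powr_add[symmetric])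
  with assms show ?thesis by (simp add: layer_weight_def field_simps)
qed

lemma powr_ratio_mono:
  fixes q q0 a a0 :: real
  assumes "q0 \<le> q" "a \<le> a0" "0 < \<tau>" "\<tau> \<le> \<tau>'" "0 < t'" "t' \<le> t"
  shows "\<tau> powr (q - q0) * t powr (a - a0) \<le> \<tau>' powr (q - q0) * t' powr (a - a0)"
  using assms by (intro mult_mono powr_mono2 powr_mono2') auto

lemma layer_weight_separating_constant:
  fixes L :: ennreal
  assumes q: "0 < q0" "q0 \<le> q" and a: "0 < a" "a \<le> a0" and "0 < \<tau>0"
  obtains K where
    "\<And>t \<tau>. 0 < t \<Longrightarrow> 0 < \<tau> \<Longrightarrow> \<tau> \<le> \<tau>0 \<Longrightarrow> L \<le> ennreal t \<Longrightarrow>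
      ennreal (layer_weight q a t \<tau>) \<le> K * ennreal (layer_weight q0 a0 t \<tau>)"
    "\<And>t \<tau>. 0 < t \<Longrightarrow> \<tau>0 \<le> \<tau> \<Longrightarrow> ennreal t < L \<Longrightarrow>
      K * ennreal (layer_weight q0 a0 t \<tau>) \<le> ennreal (layer_weight q a t \<tau>)"
proof (cases L)
  case top
  then show ?thesis by (intro that[of 0]) (auto simp: top_unique)
next
  case (real l)
  show ?thesis
  proof (cases "l = 0")
    case True
    show ?thesis
    proof (rule that[of top])
      fix t \<tau> :: real assume "0 < t" "0 < \<tau>"
      then have "0 < layer_weight q0 a0 t \<tau>" using q a by (intro layer_weight_pos) auto
      then show "ennreal (layer_weight q a t \<tau>) \<le> top * ennreal (layer_weight q0 a0 t \<tau>)"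
        by (simp add: ennreal_top_mult)
    qed (use True real in auto)
  next
    case False
    with real have "0 < l" by simp
    define c where "c = q / q0 * (a / a0)"
    have "0 \<le> c" using q a by (simp add: c_def)
    define K where "K = c * (\<tau>0 powr (q - q0) * l powr (a - a0))"
    have "0 \<le> K" unfolding K_def using \<open>0 \<le> c\<close> by simp
    have w0: "0 \<le> layer_weight q0 a0 t \<tau>" for t \<tau>
      using q a by (simp add: layer_weight_nonneg)
    have factor: "layer_weight q a t \<tau> = c * (\<tau> powr (q - q0) * t powr (a - a0)) * layer_weight q0 a0 t \<tau>" for t \<tau>
      unfolding c_def using q a by (intro layer_weight_factor) auto
    show ?thesis
    proof (rule that[of "ennreal K"])
      fix t \<tau> assume "0 < t" "0 < \<tau>" "\<tau> \<le> \<tau>0" "L \<le> ennreal t"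
      then have "\<tau> powr (q - q0) * t powr (a - a0) \<le> \<tau>0 powr (q - q0) * l powr (a - a0)"
        using real q a \<open>0 < l\<close> by (intro powr_ratio_mono) (auto simp: ennreal_le_iff)
      then have "layer_weight q a t \<tau> \<le> K * layer_weight q0 a0 t \<tau>"
        unfolding factor K_def using \<open>0 \<le> c\<close> w0 by (intro mult_right_mono mult_left_mono) auto
      then show "ennreal (layer_weight q a t \<tau>) \<le> ennreal K * ennreal (layer_weight q0 a0 t \<tau>)"
        using \<open>0 \<le> K\<close> w0 by (simp add: ennreal_leI flip: ennreal_mult)
    next
      fix t \<tau> assume "0 < t" "\<tau>0 \<le> \<tau>" "ennreal t < L"
      then have "\<tau>0 powr (q - q0) * l powr (a - a0) \<le> \<tau> powr (q - q0) * t powr (a - a0)"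
        using real q a \<open>0 < \<tau>0\<close> by (intro powr_ratio_mono) (auto simp: ennreal_less_iff)
      then have "K * layer_weight q0 a0 t \<tau> \<le> layer_weight q a t \<tau>"
        unfolding factor K_def using \<open>0 \<le> c\<close> w0 by (intro mult_right_mono mult_left_mono) auto
      then show "ennreal K * ennreal (layer_weight q0 a0 t \<tau>) \<le> ennreal (layer_weight q a t \<tau>)"
        using \<open>0 \<le> K\<close> w0 by (simp add: ennreal_leI flip: ennreal_mult)
    qed
  qed
qed

lemma lz_dens_measurable [measurable]: "lz_dens M f p q \<in> borel_measurable borel"
  unfolding lz_dens_def by measurable

lemma lz_dens_eq_top_iff:
  assumes "0 < t" "0 < p" "0 < q"
  shows "lz_dens M f p q t = top \<longleftrightarrow> rearr M f t = top"
  using assms by (simp add: lz_dens_def ennreal_mult_eq_top_iff)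

lemma lz_dens_diff_layer_cake:
  assumes "0 < t" "0 < p" "0 < q" "\<not> (rearr M f t = top \<and> rearr M g t = top)"
  shows "lz_dens M f p q t - lz_dens M g p q t
    = (\<integral>\<^sup>+ \<tau>\<in>levels_between (rearr M g t) (rearr M f t). ennreal (layer_weight q (q / p) t \<tau>) \<partial>lborel)"
proof -
  define w where "w = q / p * t powr (q / p - 1)"
  have "0 \<le> w" using assms by (simp add: w_def)
  have "lz_dens M f p q t - lz_dens M g p q t = ennreal w * (epow (rearr M f t) q - epow (rearr M g t) q)"
    unfolding lz_dens_def w_def[symmetric] by (simp add: ennreal_right_diff_distrib mult.commute)
  also have "\<dots> = ennreal w * (\<integral>\<^sup>+ \<tau>\<in>levels_between (rearr M g t) (rearr M f t). ennreal (q * \<tau> powr (q - 1)) \<partial>lborel)"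
    using assms by (simp add: epow_diff_layer_cake)
  also have "\<dots> = (\<integral>\<^sup>+ \<tau>\<in>levels_between (rearr M g t) (rearr M f t). ennreal (layer_weight q (q / p) t \<tau>) \<partial>lborel)"
  proof -
    have "ennreal (layer_weight q (q / p) t \<tau>) = ennreal w * ennreal (q * \<tau> powr (q - 1))" for \<tau>
      using \<open>0 \<le> w\<close> assms unfolding layer_weight_def w_def[symmetric]
      by (simp add: ennreal_mult mult.commute)
    then show ?thesis
      by (subst nn_integral_cmult[symmetric]) (auto simp: mult.assoc)
  qed
  finally show ?thesis .
qed

lemma lz_dens_diff_le_cmult:
  assumes "0 < t" "0 < p" "0 < q" "0 < p0" "0 < q0" "\<not> (rearr M f t = top \<and> rearr M g t = top)"
    and "\<And>\<tau>. \<tau> \<in> levels_between (rearr M f t) (rearr M g t) \<Longrightarrow>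
      ennreal (layer_weight q (q / p) t \<tau>) \<le> K * ennreal (layer_weight q0 (q0 / p0) t \<tau>)"
  shows "lz_dens M g p q t - lz_dens M f p q t \<le> K * (lz_dens M g p0 q0 t - lz_dens M f p0 q0 t)"
proof -
  let ?S = "levels_between (rearr M f t) (rearr M g t)"
  have "(\<integral>\<^sup>+ \<tau>\<in>?S. ennreal (layer_weight q (q / p) t \<tau>) \<partial>lborel)
      \<le> (\<integral>\<^sup>+ \<tau>\<in>?S. K * ennreal (layer_weight q0 (q0 / p0) t \<tau>) \<partial>lborel)"
    using assms(7) by (intro nn_integral_mono) (simp add: indicator_def)
  also have "\<dots> = K * (\<integral>\<^sup>+ \<tau>\<in>?S. ennreal (layer_weight q0 (q0 / p0) t \<tau>) \<partial>lborel)"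
    by (subst nn_integral_cmult[symmetric]) (auto simp: layer_weight_def mult.assoc)
  finally show ?thesis
    using assms(1-6) by (simp add: lz_dens_diff_layer_cake conj_commute)
qed

lemma lz_dens_diff_ge_cmult:
  assumes "0 < t" "0 < p" "0 < q" "0 < p0" "0 < q0" "\<not> (rearr M f t = top \<and> rearr M g t = top)"
    and "\<And>\<tau>. \<tau> \<in> levels_between (rearr M g t) (rearr M f t) \<Longrightarrow>
      K * ennreal (layer_weight q0 (q0 / p0) t \<tau>) \<le> ennreal (layer_weight q (q / p) t \<tau>)"
  shows "K * (lz_dens M f p0 q0 t - lz_dens M g p0 q0 t) \<le> lz_dens M f p q t - lz_dens M g p q t"
proof -
  let ?S = "levels_between (rearr M g t) (rearr M f t)"
  have "K * (\<integral>\<^sup>+ \<tau>\<in>?S. ennreal (layer_weight q0 (q0 / p0) t \<tau>) \<partial>lborel)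
      = (\<integral>\<^sup>+ \<tau>\<in>?S. K * ennreal (layer_weight q0 (q0 / p0) t \<tau>) \<partial>lborel)"
    by (subst nn_integral_cmult[symmetric]) (auto simp: layer_weight_def mult.assoc)
  also have "\<dots> \<le> (\<integral>\<^sup>+ \<tau>\<in>?S. ennreal (layer_weight q (q / p) t \<tau>) \<partial>lborel)"
    using assms(7) by (intro nn_integral_mono) (simp add: indicator_def)
  finally show ?thesis
    using assms(1-6) by (simp add: lz_dens_diff_layer_cake)
qed

lemma lz_dens_diff_nn_integral_le:
  fixes f g :: "'a \<Rightarrow> 'b::real_normed_vector"
  assumes p: "0 < p0" "p0 \<le> p" and q: "0 < q0" "q0 \<le> q" and pq: "q / p \<le> q0 / p0"
    and fm: "f \<in> borel_measurable M" and gm: "g \<in> borel_measurable M"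
    and "0 < \<tau>0"
    and lo: "\<And>\<tau>. 0 < \<tau> \<Longrightarrow> \<tau> < \<tau>0 \<Longrightarrow> distr_fun M f \<tau> \<le> distr_fun M g \<tau>"
    and hi: "\<And>\<tau>. \<tau> > \<tau>0 \<Longrightarrow> distr_fun M f \<tau> \<ge> distr_fun M g \<tau>"
    and hyp: "lz_diff_integral_nonneg M f g p0 q0"
  shows "(\<integral>\<^sup>+ t\<in>{0<..}. (lz_dens M g p q t - lz_dens M f p q t) \<partial>lborel)
       \<le> (\<integral>\<^sup>+ t\<in>{0<..}. (lz_dens M f p q t - lz_dens M g p q t) \<partial>lborel)"
proof -
  have "0 < p" "0 < q" "0 < q / p" using p q by auto
  obtain K where
    KN: "\<And>t \<tau>. 0 < t \<Longrightarrow> 0 < \<tau> \<Longrightarrow> \<tau> \<le> \<tau>0 \<Longrightarrow> (SUP \<sigma>\<in>{\<tau>0<..}. distr_fun M f \<sigma>) \<le> ennreal t \<Longrightarrow>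
      ennreal (layer_weight q (q / p) t \<tau>) \<le> K * ennreal (layer_weight q0 (q0 / p0) t \<tau>)" and
    KP: "\<And>t \<tau>. 0 < t \<Longrightarrow> \<tau>0 \<le> \<tau> \<Longrightarrow> ennreal t < (SUP \<sigma>\<in>{\<tau>0<..}. distr_fun M f \<sigma>) \<Longrightarrow>
      K * ennreal (layer_weight q0 (q0 / p0) t \<tau>) \<le> ennreal (layer_weight q (q / p) t \<tau>)"
    using layer_weight_separating_constant[OF q \<open>0 < q / p\<close> pq \<open>0 < \<tau>0\<close>] by blast
  have not_both_top: "AE t in lborel. t \<in> {0<..} \<longrightarrow> \<not> (rearr M f t = top \<and> rearr M g t = top)"
    using hyp p q unfolding lz_diff_integral_nonneg_def
    by (auto elim!: AE_mp simp: lz_dens_eq_top_iff)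
  show ?thesis
  proof (rule set_nn_integral_le_via_cmult[where K = K])
    show "AE t in lborel. t \<in> {0<..} \<longrightarrow>
        lz_dens M g p q t - lz_dens M f p q t \<le> K * (lz_dens M g p0 q0 t - lz_dens M f p0 q0 t)"
      using not_both_top
    proof eventually_elim
      case (elim t)
      show ?case
      proof
        assume "t \<in> {0<..}"
        with elim show "lz_dens M g p q t - lz_dens M f p q t \<le> K * (lz_dens M g p0 q0 t - lz_dens M f p0 q0 t)"
          using p q \<open>0 < p\<close> rearr_gap_below_crossing[OF fm hi]
          by (intro lz_dens_diff_le_cmult KN) (auto simp: levels_between_def)
      qed
    qed
    show "AE t in lborel. t \<in> {0<..} \<longrightarrow>
        K * (lz_dens M f p0 q0 t - lz_dens M g p0 q0 t) \<le> lz_dens M f p q t - lz_dens M g p q t"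
      using not_both_top
    proof eventually_elim
      case (elim t)
      show ?case
      proof
        assume "t \<in> {0<..}"
        with elim show "K * (lz_dens M f p0 q0 t - lz_dens M g p0 q0 t) \<le> lz_dens M f p q t - lz_dens M g p q t"
          using p q \<open>0 < p\<close> rearr_gap_above_crossing[OF gm lo \<open>0 < \<tau>0\<close>]
          by (intro lz_dens_diff_ge_cmult KP) auto
      qed
    qed
    show "(\<integral>\<^sup>+ t\<in>{0<..}. (lz_dens M g p0 q0 t - lz_dens M f p0 q0 t) \<partial>lborel)
        \<le> (\<integral>\<^sup>+ t\<in>{0<..}. (lz_dens M f p0 q0 t - lz_dens M g p0 q0 t) \<partial>lborel)"
      using hyp unfolding lz_diff_integral_nonneg_def by simp
  qed measurable
qed

lemma lz_dens_diff_eq_ennreal: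
  assumes "0 < t" "0 < p" "0 < q" "rearr M f t < top" "rearr M g t < top"
  shows "lz_dens M f p q t - lz_dens M g p q t =
    ennreal ((enn2real (rearr M f t) powr q - enn2real (rearr M g t) powr q) * (q / p * t powr (q / p - 1)))"
proof -
  define w where "w = q / p * t powr (q / p - 1)"
  have "0 \<le> w" using assms by (simp add: w_def)
  obtain x y where "rearr M f t = ennreal x" "0 \<le> x" "rearr M g t = ennreal y" "0 \<le> y"
    using assms(4,5) by (cases "rearr M f t"; cases "rearr M g t") auto
  with \<open>0 \<le> w\<close> show ?thesis
    unfolding lz_dens_def w_def[symmetric]
    by (simp add: epow_ennreal ennreal_minus left_diff_distrib flip: ennreal_mult)
qed

lemma lz_diff_lebesgue_integral_nonneg:
  assumes "0 < p" "0 < q"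
    and le: "(\<integral>\<^sup>+ t\<in>{0<..}. (lz_dens M g p q t - lz_dens M f p q t) \<partial>lborel)
       \<le> (\<integral>\<^sup>+ t\<in>{0<..}. (lz_dens M f p q t - lz_dens M g p q t) \<partial>lborel)"
    and finite: "AE t in lborel. t > 0 \<longrightarrow> rearr M f t < top \<and> rearr M g t < top"
    and integrable: "set_integrable lborel {0<..}
      (\<lambda>t. (enn2real (rearr M f t) powr q - enn2real (rearr M g t) powr q) * t powr (q / p - 1))"
  shows "0 \<le> (\<integral>t\<in>{0<..}. (enn2real (rearr M f t) powr q - enn2real (rearr M g t) powr q)
                             * (q / p * t powr (q / p - 1)) \<partial>lborel)"
proof -
  define u where "u t = indicator {0<..} t *
    ((enn2real (rearr M f t) powr q - enn2real (rearr M g t) powr q) * (q / p * t powr (q / p - 1)))" for t :: real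
  have u: "integrable lborel u"
    using set_integrable_mult_right[OF integrable, of "q / p"]
    unfolding set_integrable_def u_def by (simp add: mult_ac)
  have "AE t in lborel.
      ennreal (- u t) = (lz_dens M g p q t - lz_dens M f p q t) * indicator {0<..} t \<and>
      ennreal (u t) = (lz_dens M f p q t - lz_dens M g p q t) * indicator {0<..} t"
    using finite
  proof eventually_elim
    case (elim t)
    show ?case
    proof (cases "0 < t")
      case True
      have "- u t = (enn2real (rearr M g t) powr q - enn2real (rearr M f t) powr q) * (q / p * t powr (q / p - 1))"
        using True by (simp add: u_def algebra_simps)
      with True elim assms(1,2) show ?thesis
        by (simp add: u_def lz_dens_diff_eq_ennreal)
    qed (simp add: u_def)
  qed
  then have neg: "(\<integral>\<^sup>+ t. ennreal (- u t) \<partial>lborel) = (\<integral>\<^sup>+ t\<in>{0<..}. (lz_dens M g p q t - lz_dens M f p q t) \<partial>lborel)"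
    and pos: "(\<integral>\<^sup>+ t. ennreal (u t) \<partial>lborel) = (\<integral>\<^sup>+ t\<in>{0<..}. (lz_dens M f p q t - lz_dens M g p q t) \<partial>lborel)"
    by (auto intro!: nn_integral_cong_AE elim: AE_mp)
  have "0 \<le> integral\<^sup>L lborel u"
    using u le unfolding neg[symmetric] pos[symmetric] by (rule integral_nonneg_of_neg_part_le)
  then show ?thesis
    unfolding set_lebesgue_integral_def u_def real_scaleR_def .
qed

lemma lorentz_norm_le_of_diff_le:
  assumes "0 < q"
    and "(\<integral>\<^sup>+ t\<in>{0<..}. (lz_dens M g p q t - lz_dens M f p q t) \<partial>lborel)
       \<le> (\<integral>\<^sup>+ t\<in>{0<..}. (lz_dens M f p q t - lz_dens M g p q t) \<partial>lborel)"
  shows "lorentz_norm M p q g \<le> lorentz_norm M p q f"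
proof -
  have "(\<integral>\<^sup>+ t\<in>{0<..}. lz_dens M g p q t \<partial>lborel) \<le> (\<integral>\<^sup>+ t\<in>{0<..}. lz_dens M f p q t \<partial>lborel)"
    using assms(2) by (rule set_nn_integral_le_of_diff_le[rotated 3]) simp_all
  with assms(1) show ?thesis
    unfolding lorentz_norm_def by (intro epow_mono) simp_all
qed

theorem mainTheorem7:
  fixes M :: "'a measure"
    and f g :: "'a \<Rightarrow> 'b::{real_normed_vector, second_countable_topology}"
    and p p0 q q0 \<tau>0 :: real
  assumes "0 < p0" "p0 \<le> p" "0 < q0" "q0 \<le> q" "q / p \<le> q0 / p0"
    and "f \<in> borel_measurable M" "g \<in> borel_measurable M"
    and "0 < \<tau>0"
    and "\<And>\<tau>. 0 < \<tau> \<Longrightarrow> \<tau> < \<tau>0 \<Longrightarrow> distr_fun M f \<tau> \<le> distr_fun M g \<tau>"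
    and "\<And>\<tau>. \<tau> > \<tau>0 \<Longrightarrow> distr_fun M f \<tau> \<ge> distr_fun M g \<tau>"
    and "lz_diff_integral_nonneg M f g p0 q0"
  shows "(((AE t in lborel. t > 0 \<longrightarrow> rearr M f t < top \<and> rearr M g t < top) \<and>
          set_integrable lborel {0<..}
            (\<lambda>t. (enn2real (rearr M f t) powr q - enn2real (rearr M g t) powr q) * t powr (q / p - 1)))
         \<longrightarrow> (\<integral>t\<in>{0<..}. (enn2real (rearr M f t) powr q - enn2real (rearr M g t) powr q)
                             * ((q / p) * t powr (q / p - 1)) \<partial>lborel) \<ge> 0) \<and>
         (in_lorentz M p q f \<and> in_lorentz M p q g \<longrightarrow> lorentz_norm M p q g \<le> lorentz_norm M p q f)"
proof -
  have "0 < p" "0 < q" using assms by auto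
  have le: "(\<integral>\<^sup>+ t\<in>{0<..}. (lz_dens M g p q t - lz_dens M f p q t) \<partial>lborel)
       \<le> (\<integral>\<^sup>+ t\<in>{0<..}. (lz_dens M f p q t - lz_dens M g p q t) \<partial>lborel)"
    by (rule lz_dens_diff_nn_integral_le[OF assms])
  \<comment> \<open>the norm comparison holds without \<open>f, g \<in> L(p, q)\<close>\<close>
  show ?thesis
    using lz_diff_lebesgue_integral_nonneg[OF \<open>0 < p\<close> \<open>0 < q\<close> le]
      lorentz_norm_le_of_diff_le[OF \<open>0 < q\<close> le]
    by blast
qed

end
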